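(* Let $\mathbb{L}$ be a complete, algebraically closed non-Archimedean field of characteristic $0$ and let $\phi$ be a rational map over $\mathbb{L}$ of degree $\geq 2$ having good reduction. Let $\vec v$ be a direction at the Gauss point $\zeta_{Gauss}$ which, viewed as a point of $\mathbb{P}^1(\tilde{\mathbb{L}})$, is a fixed critical point of the reduction $\tilde\phi$. Let $\xi$ be a fixed point of $\phi$ lying in the open Berkovich disk $B_{\vec v}$ (the component of $\mathbb{P}^1_{an}\setminus\{\zeta_{Gauss}\}$ corresponding to $\vec v$). Then $\xi$ is of type $1$, i.e. $\xi\in\mathbb{P}^1(\mathbb{L})$.
   Context: $\mathbb{P}^1_{an}$ is the Berkovich projective line over $\mathbb{L}$; $\zeta_{Gauss}$ is the type $2$ point corresponding to the closed unit disk $D(0,1)$. Directions at $\zeta_{Gauss}$ (connected components of $\mathbb{P}^1_{an}\setminus\{\zeta_{Gauss}\}$) are identified with $\mathbb{P}^1(\tilde{\mathbb{L}})$, $\tilde{\mathbb{L}}$ the residue field, the direction containing $a\in\mathbb{P}^1(\mathbb{L})$ corresponding to its reduction $\tilde a$. The reduction $\tilde\phi$ is obtained by reducing a normalized form of $\phi$ (coprime numerator/denominator, coefficients in the valuation ring, not all in the maximal ideal) modulo the maximal ideal and cancelling common factors; good reduction means $\deg\tilde\phi=\deg\phi$. A critical point of $\tilde\phi$ is a point where $\tilde\phi$ has multiplicity at least $2$. *)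

theory Defs
  imports "HOL-Computational_Algebra.Computational_Algebra" "HOL-Computational_Algebra.Field_as_Ring"
begin

class nonarch_field = field_char_0 +
  fixes nabs :: "'a \<Rightarrow> real"
  assumes nabs_nonneg: "0 \<le> nabs x"
    and nabs_eq_0_iff: "nabs x = 0 \<longleftrightarrow> x = 0"
    and nabs_mult: "nabs (x * y) = nabs x * nabs y"
    and nabs_ultra: "nabs (x + y) \<le> max (nabs x) (nabs y)"

context nonarch_field begin
lemma nabs_one[simp]: "nabs 1 = 1"
proof -
  have "nabs 1 = nabs 1 * nabs 1" using nabs_mult[of 1 1] by simp
  moreover have "nabs 1 \<noteq> 0" using nabs_eq_0_iff by simp
  ultimately show ?thesis by simp
qed
lemma nabs_zero[simp]: "nabs 0 = 0" using nabs_eq_0_iff by simp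
lemma nabs_minus_one: "nabs (-1) = 1"
proof -
  have "nabs (-1) * nabs (-1) = 1" using nabs_mult[of "-1" "-1"] by simp
  then show ?thesis using nabs_nonneg[of "-1"]
    by (metis mult_cancel_right1 mult_eq_0_iff nabs_eq_0_iff nle_le one_neq_zero  mult_right_mono mult_left_mono mult_le_one dual_order.antisym mult_less_cancel_right2 not_le order_less_irrefl)
qed
lemma nabs_minus[simp]: "nabs (- x) = nabs x"
  using nabs_mult[of "-1" x] nabs_minus_one by simp
lemma nabs_diff: "nabs (x - y) \<le> max (nabs x) (nabs y)"
  using nabs_ultra[of x "- y"] by simp
lemma nabs_commute: "nabs (x - y) = nabs (y - x)"
  by (metis minus_diff_eq nabs_minus)
lemma nabs_inverse: "x \<noteq> 0 \<Longrightarrow> nabs (inverse x) = inverse (nabs x)"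
proof -
  assume "x \<noteq> 0"
  then have "nabs x * nabs (inverse x) = 1" "nabs x \<noteq> 0" using nabs_mult[of x "inverse x"] nabs_eq_0_iff by auto
  then show ?thesis by (simp add: field_simps)
qed
lemma nabs_strict: "nabs y < nabs x \<Longrightarrow> nabs (x + y) = nabs x"
proof -
  assume a: "nabs y < nabs x"
  have "nabs x \<le> max (nabs (x+y)) (nabs (-y))" using nabs_ultra[of "x+y" "-y"] by simp
  with a have "nabs x \<le> nabs (x + y)" by (simp add: max_def split: if_splits)
  moreover have "nabs (x+y) \<le> nabs x" using nabs_ultra[of x y] a by simp
  ultimately show ?thesis by simp
qed
end

definition resrel :: "'a::nonarch_field \<Rightarrow> 'a \<Rightarrow> bool" where
  "resrel x y \<longleftrightarrow> nabs x \<le> 1 \<and> nabs y \<le> 1 \<and> nabs (x - y) < 1"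

lemma resrel_part_equivp: "part_equivp (resrel :: 'a::nonarch_field \<Rightarrow> _)"
proof (rule part_equivpI)
  show "\<exists>x::'a. resrel x x" by (rule exI[of _ 0]) (simp add: resrel_def)
  show "symp (resrel :: 'a \<Rightarrow> _)" unfolding symp_def resrel_def using nabs_commute by metis
  show "transp (resrel :: 'a \<Rightarrow> _)" unfolding transp_def resrel_def
  proof (intro allI impI, elim conjE, intro conjI)
    fix x y z :: 'a
    assume "nabs (x - y) < 1" "nabs (y - z) < 1"
    then show "nabs (x - z) < 1" using nabs_ultra[of "x - y" "y - z"] by simp
  qed
qed

quotient_type (overloaded) 'a res = "'a::nonarch_field" / partial: resrel
  by (rule resrel_part_equivp)

lemma resrel_add: "resrel x x' \<Longrightarrow> resrel y y' \<Longrightarrow> resrel (x + y) (x' + y')"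
  unfolding resrel_def using nabs_ultra[of x y] nabs_ultra[of x' y'] nabs_ultra[of "x - x'" "y - y'"]
  by (auto simp: algebra_simps)

lemma resrel_uminus: "resrel x x' \<Longrightarrow> resrel (- x) (- x')"
  unfolding resrel_def by (metis minus_diff_eq minus_diff_minus nabs_minus)

lemma resrel_mult: "resrel x x' \<Longrightarrow> resrel y y' \<Longrightarrow> resrel (x * y) (x' * y')"
proof -
  assume a: "resrel x x'" "resrel y y'"
  then have b: "nabs x \<le> 1" "nabs x' \<le> 1" "nabs y \<le> 1" "nabs y' \<le> 1" "nabs (x - x') < 1" "nabs (y - y') < 1"
    unfolding resrel_def by auto
  have e: "x * y - x' * y' = x * (y - y') + (x - x') * y'" by (simp add: algebra_simps)
  have "nabs (x * (y - y')) < 1" using b nabs_nonneg[of "y - y'"] nabs_nonneg[of x]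
    by (simp add: nabs_mult) (smt (verit) mult_left_le_one_le mult_le_one mult_nonneg_nonneg mult_right_mono)
  moreover have "nabs ((x - x') * y') < 1" using b nabs_nonneg[of "x - x'"] nabs_nonneg[of y']
    by (simp add: nabs_mult) (smt (verit) mult_right_le_one_le mult_le_one mult_nonneg_nonneg mult_left_mono)
  ultimately have "nabs (x * y - x' * y') < 1" unfolding e using nabs_ultra[of "x * (y - y')" "(x - x') * y'"] by simp
  moreover have "nabs (x * y) \<le> 1" "nabs (x' * y') \<le> 1" using b
    by (auto simp: nabs_mult intro!: mult_le_one nabs_nonneg)
  ultimately show ?thesis unfolding resrel_def by simp
qed

definition res_inv :: "'a::nonarch_field \<Rightarrow> 'a" where
  "res_inv x = (if nabs x = 1 then inverse x else 0)"

lemma resrel_sym: "resrel x x' \<Longrightarrow> resrel x' x"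
  unfolding resrel_def using nabs_commute[of x x'] by simp

lemma resrel_unit: "resrel x x' \<Longrightarrow> nabs x = 1 \<Longrightarrow> nabs x' = 1"
proof -
  assume a: "resrel x x'" and b: "nabs x = 1"
  have "nabs (x' - x) < nabs x" using a b nabs_commute[of x x'] unfolding resrel_def by simp
  then have "nabs (x + (x' - x)) = nabs x" by (rule nabs_strict)
  moreover have "x + (x' - x) = x'" by simp
  ultimately show ?thesis using b by simp
qed

lemma resrel_inv: "resrel x x' \<Longrightarrow> resrel (res_inv x) (res_inv x')"
proof -
  assume a: "resrel x x'"
  show ?thesis
  proof (cases "nabs x = 1")
    case True
    then have t: "nabs x' = 1" using resrel_unit[OF a] by simp
    have nz: "x \<noteq> 0" "x' \<noteq> 0" using True t by (auto simp del: nabs_one) 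
    have e: "inverse x - inverse x' = (x' - x) * (inverse x * inverse x')"
    proof -
      have "inverse x - inverse x' = - (inverse x * (x - x') * inverse x')" by (rule inverse_diff_inverse[OF nz])
      also have "\<dots> = (x' - x) * (inverse x * inverse x')" by (simp add: algebra_simps)
      finally show ?thesis .
    qed
    have i1: "nabs (inverse x) = 1" using nabs_inverse[OF nz(1)] True by simp
    have i2: "nabs (inverse x') = 1" using nabs_inverse[OF nz(2)] t by simp
    have "nabs (inverse x - inverse x') = nabs (x' - x) * (nabs (inverse x) * nabs (inverse x'))"
      unfolding e by (simp only: nabs_mult)
    also have "\<dots> = nabs (x - x')" using i1 i2 nabs_commute[of x x'] by simp
    finally have d: "nabs (inverse x - inverse x') = nabs (x - x')" .
    have "res_inv x = inverse x" "res_inv x' = inverse x'" using True t unfolding res_inv_def by auto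
    then show ?thesis using a d i1 i2 unfolding resrel_def by simp
  next
    case False
    then have "nabs x' \<noteq> 1" using resrel_unit resrel_sym a by blast
    then show ?thesis using False unfolding resrel_def res_inv_def by simp
  qed
qed

instantiation res :: (nonarch_field) field
begin
lift_definition zero_res :: "'a res" is "0" by (simp add: resrel_def)
lift_definition one_res :: "'a res" is "1" by (simp add: resrel_def)
lift_definition plus_res :: "'a res \<Rightarrow> 'a res \<Rightarrow> 'a res" is "(+)" by (rule resrel_add)
lift_definition uminus_res :: "'a res \<Rightarrow> 'a res" is "uminus" by (rule resrel_uminus)
lift_definition minus_res :: "'a res \<Rightarrow> 'a res \<Rightarrow> 'a res" is "\<lambda>x y. x + - y"
  by (intro resrel_add resrel_uminus)
lift_definition times_res :: "'a res \<Rightarrow> 'a res \<Rightarrow> 'a res" is "(*)" by (rule resrel_mult)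
lift_definition inverse_res :: "'a res \<Rightarrow> 'a res" is "res_inv" by (rule resrel_inv)
definition divide_res :: "'a res \<Rightarrow> 'a res \<Rightarrow> 'a res" where "divide_res x y = x * inverse y"
instance
proof
  fix a b c :: "'a res"
  show "a * b * c = a * (b * c)" by transfer (metis resrel_mult mult.assoc)
  show "a * b = b * a" by transfer (metis resrel_mult mult.commute)
  show "1 * a = a" by transfer simp
  show "a + b + c = a + (b + c)" by transfer (metis resrel_add add.assoc)
  show "a + b = b + a" by transfer (metis resrel_add add.commute)
  show "0 + a = a" by transfer simp
  show "- a + a = 0" by transfer (simp add: resrel_def)
  show "a - b = a + - b" by transfer (metis resrel_add resrel_uminus)
  show "(a + b) * c = a * c + b * c" by transfer (metis resrel_add resrel_mult distrib_right)
  show "(0::'a res) \<noteq> 1" by transfer (simp add: resrel_def)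
  show "a div b = a * inverse b" by (simp add: divide_res_def)
  show "inverse (0::'a res) = 0" by transfer (simp add: resrel_def res_inv_def)
  show "a \<noteq> 0 \<Longrightarrow> inverse a * a = 1"
  proof transfer
    fix a :: 'a
    assume r: "resrel a a" and n: "\<not> resrel a 0"
    then have "nabs a = 1" unfolding resrel_def by simp
    then have "a \<noteq> 0" using nabs_eq_0_iff by force
    with \<open>nabs a = 1\<close> show "resrel (res_inv a * a) 1" unfolding resrel_def res_inv_def by simp
  qed
qed
end


section \<open>Residue field as a Euclidean ring (so that polynomial gcds exist)\<close>

instantiation res :: (nonarch_field)
  "{unique_euclidean_ring, normalization_euclidean_semiring, normalization_semidom_multiplicative}"
begin
definition [simp]: "normalize_res = (normalize_field :: 'a res \<Rightarrow> _)"
definition [simp]: "unit_factor_res = (unit_factor_field :: 'a res \<Rightarrow> _)"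
definition [simp]: "modulo_res = (mod_field :: 'a res \<Rightarrow> _)"
definition [simp]: "euclidean_size_res = (euclidean_size_field :: 'a res \<Rightarrow> _)"
definition [simp]: "division_segment (x :: 'a res) = 1"
instance
  by standard
    (simp_all add: dvd_field_iff field_split_simps split: if_splits)
end

instantiation res :: (nonarch_field) euclidean_ring_gcd
begin
definition gcd_res :: "'a res \<Rightarrow> 'a res \<Rightarrow> 'a res" where
  "gcd_res = Euclidean_Algorithm.gcd"
definition lcm_res :: "'a res \<Rightarrow> 'a res \<Rightarrow> 'a res" where
  "lcm_res = Euclidean_Algorithm.lcm"
definition Gcd_res :: "'a res set \<Rightarrow> 'a res" where
 "Gcd_res = Euclidean_Algorithm.Gcd"
definition Lcm_res :: "'a res set \<Rightarrow> 'a res" where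
 "Lcm_res = Euclidean_Algorithm.Lcm"
instance by standard (simp_all add: gcd_res_def lcm_res_def Gcd_res_def Lcm_res_def)
end

instance res :: (nonarch_field) field_gcd ..

definition red :: "'a::nonarch_field \<Rightarrow> 'a res" where
  "red x = abs_res x"

definition nabs_nontrivial :: "'a::nonarch_field itself \<Rightarrow> bool" where
  "nabs_nontrivial _ \<longleftrightarrow> (\<exists>x::'a. nabs x \<noteq> 0 \<and> nabs x \<noteq> 1)"

definition nabs_complete :: "'a::nonarch_field itself \<Rightarrow> bool" where
  "nabs_complete _ \<longleftrightarrow> (\<forall>X :: nat \<Rightarrow> 'a.
      (\<forall>e>0. \<exists>N. \<forall>m\<ge>N. \<forall>n\<ge>N. nabs (X m - X n) < e) \<longrightarrow>
      (\<exists>l. \<forall>e>0. \<exists>N. \<forall>n\<ge>N. nabs (X n - l) < e))"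

definition alg_closed :: "'a::field itself \<Rightarrow> bool" where
  "alg_closed _ \<longleftrightarrow> (\<forall>p :: 'a poly. degree p \<ge> 1 \<longrightarrow> (\<exists>x. poly p x = 0))"

text \<open>Points of the Berkovich affine line: multiplicative seminorms on L[T] extending nabs.
  The Berkovich projective line is the affine line together with the point at infinity.\<close>

definition mult_seminorm :: "('a::nonarch_field poly \<Rightarrow> real) \<Rightarrow> bool" where
  "mult_seminorm z \<longleftrightarrow>
     (\<forall>f. 0 \<le> z f) \<and>
     (\<forall>f g. z (f * g) = z f * z g) \<and>
     (\<forall>f g. z (f + g) \<le> z f + z g) \<and>
     (\<forall>c. z [:c:] = nabs c)"

type_synonym 'a berk = "('a poly \<Rightarrow> real) option"

abbreviation BAff :: "('a poly \<Rightarrow> real) \<Rightarrow> 'a berk" where "BAff \<equiv> Some"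
abbreviation BInfty :: "'a berk" where "BInfty \<equiv> None"

definition berk_P1 :: "'a::nonarch_field berk set" where
  "berk_P1 = {BAff z | z. mult_seminorm z} \<union> {BInfty}"

definition type1pt :: "'a::nonarch_field \<Rightarrow> 'a berk" where
  "type1pt a = BAff (\<lambda>f. nabs (poly f a))"

definition is_type1 :: "'a::nonarch_field berk \<Rightarrow> bool" where
  "is_type1 \<xi> \<longleftrightarrow> \<xi> = BInfty \<or> (\<exists>a. \<xi> = type1pt a)"

definition gauss_pt :: "'a::nonarch_field berk" where
  "gauss_pt = BAff (\<lambda>f. Max ((\<lambda>i. nabs (coeff f i)) ` {..degree f}))"

text \<open>A rational map phi = P/Q is given by a pair of coprime polynomials; its degree is
  max(deg P, deg Q).\<close>

definition rat_deg :: "'b::zero poly \<Rightarrow> 'b poly \<Rightarrow> nat" where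
  "rat_deg P Q = max (degree P) (degree Q)"

text \<open>Numerator of g(P/Q) = comp_num P Q g / Q^(deg g).\<close>
definition comp_num :: "'b::comm_ring_1 poly \<Rightarrow> 'b poly \<Rightarrow> 'b poly \<Rightarrow> 'b poly" where
  "comp_num P Q g = (\<Sum>i\<le>degree g. smult (coeff g i) (P ^ i * Q ^ (degree g - i)))"

text \<open>Action on the Berkovich projective line: [g]_{phi(zeta)} = [g o phi]_zeta.\<close>
definition berk_map :: "'a::nonarch_field poly \<Rightarrow> 'a poly \<Rightarrow> 'a berk \<Rightarrow> 'a berk" where
  "berk_map P Q \<xi> = (case \<xi> of
      None \<Rightarrow> (if degree Q < degree P then BInfty
                  else type1pt (coeff P (degree Q) / lead_coeff Q))
    | Some z \<Rightarrow> (if z Q = 0 then BInfty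
                  else BAff (\<lambda>g. z (comp_num P Q g) / z Q ^ degree g)))"

definition normalized :: "'a::nonarch_field poly \<Rightarrow> 'a poly \<Rightarrow> bool" where
  "normalized P Q \<longleftrightarrow> (\<forall>i. nabs (coeff P i) \<le> 1 \<and> nabs (coeff Q i) \<le> 1) \<and>
                        (\<exists>i. nabs (coeff P i) = 1 \<or> nabs (coeff Q i) = 1)"

definition norm_scalar :: "'a::nonarch_field poly \<Rightarrow> 'a poly \<Rightarrow> 'a" where
  "norm_scalar P Q = (SOME c. c \<noteq> 0 \<and> normalized (smult c P) (smult c Q))"

definition red_num0 :: "'a::nonarch_field poly \<Rightarrow> 'a poly \<Rightarrow> 'a res poly" where
  "red_num0 P Q = map_poly red (smult (norm_scalar P Q) P)"
definition red_den0 :: "'a::nonarch_field poly \<Rightarrow> 'a poly \<Rightarrow> 'a res poly" where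
  "red_den0 P Q = map_poly red (smult (norm_scalar P Q) Q)"

definition red_num :: "'a::nonarch_field poly \<Rightarrow> 'a poly \<Rightarrow> 'a res poly" where
  "red_num P Q = red_num0 P Q div gcd (red_num0 P Q) (red_den0 P Q)"
definition red_den :: "'a::nonarch_field poly \<Rightarrow> 'a poly \<Rightarrow> 'a res poly" where
  "red_den P Q = red_den0 P Q div gcd (red_num0 P Q) (red_den0 P Q)"

definition good_reduction :: "'a::nonarch_field poly \<Rightarrow> 'a poly \<Rightarrow> bool" where
  "good_reduction P Q \<longleftrightarrow> rat_deg (red_num P Q) (red_den P Q) = rat_deg P Q"

text \<open>Points of P^1(K) are elements of K option, None being the point at infinity.\<close>

definition rat_eval :: "'b::field poly \<Rightarrow> 'b poly \<Rightarrow> 'b option \<Rightarrow> 'b option" where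
  "rat_eval A B v = (case v of
      Some t \<Rightarrow> (if poly B t = 0 then None else Some (poly A t / poly B t))
    | None \<Rightarrow> (if degree B < degree A then None else Some (coeff A (degree B) / lead_coeff B)))"

text \<open>Multiplicity (local degree) of A/B at v, computed in the affine charts z and 1/z
  around v and its image.\<close>
definition rat_mult :: "'b::field poly \<Rightarrow> 'b poly \<Rightarrow> 'b option \<Rightarrow> nat" where
  "rat_mult A B v = (case v of
      Some t \<Rightarrow> (case rat_eval A B v of
                    Some s \<Rightarrow> order t (A - smult s B)
                  | None \<Rightarrow> order t B)
    | None \<Rightarrow> (case rat_eval A B v of
                    Some s \<Rightarrow> rat_deg A B - degree (A - smult s B)
                  | None \<Rightarrow> degree A - degree B))"

text \<open>Directions at the Gauss point are identified with P^1 of the residue field; the open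
  Berkovich disk B_v for v = red(a), nabs a \<le> 1, is the open disk D(a,1)^-, and for v = infinity
  it is the complement of the closed Berkovich unit disk.\<close>

definition berk_dir_disk :: "'a::nonarch_field res option \<Rightarrow> 'a berk set" where
  "berk_dir_disk v = (case v of
      Some t \<Rightarrow> {BAff z | z a. mult_seminorm z \<and> nabs a \<le> 1 \<and> red a = t \<and> z [:- a, 1:] < 1}
    | None \<Rightarrow> {BAff z | z. mult_seminorm z \<and> z [:0, 1:] > 1} \<union> {BInfty})"

end

theory Submission
  imports Defs
begin

text \<open>
  Write the fixed point as a multiplicative seminorm \<open>z\<close> and measure its distance to the
  type 1 point \<open>c\<close> by \<open>z (T - c)\<close>; fixedness reads \<open>z (T - c) * z Q = z (P - c Q)\<close>.
  Scale \<open>P, Q\<close> to integral coefficients; by good reduction their reductions represent the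
  reduction of \<open>\<phi>\<close> without cancellation. That the direction is a fixed critical point of the
  reduction says that on the residue disk containing \<open>z\<close>, \<open>Q\<close> is a unit and the numerator
  \<open>Q P' - P Q'\<close> of \<open>\<phi>'\<close> lies in the maximal ideal; a first order Taylor expansion then makes
  \<open>\<phi>\<close> a contraction, \<open>z (T - \<phi> c) \<le> \<kappa> z (T - c)\<close> with \<open>\<kappa> < 1\<close>, for all \<open>c\<close> close to \<open>z\<close>.
  If \<open>z\<close> were a norm, completeness would make the infimum of \<open>z (T - c)\<close> positive (a minimising
  sequence is Cauchy and its limit would have distance 0), which the contraction contradicts.
  So \<open>z\<close> kills a nonzero polynomial, hence some \<open>T - c\<close> as \<open>L\<close> is algebraically closed, and
  \<open>z\<close> is evaluation at \<open>c\<close>. The direction at infinity is moved to \<open>0\<close> by \<open>T \<mapsto> 1/T\<close>.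
\<close>

lemma red_add: "nabs x \<le> 1 \<Longrightarrow> nabs y \<le> 1 \<Longrightarrow> red (x + y) = red x + red (y :: 'a::nonarch_field)"
  unfolding red_def by (simp add: plus_res.abs_eq resrel_def)

lemma red_mult: "nabs x \<le> 1 \<Longrightarrow> nabs y \<le> 1 \<Longrightarrow> red (x * y) = red x * red (y :: 'a::nonarch_field)"
  unfolding red_def by (simp add: times_res.abs_eq resrel_def)

lemma red_diff: "nabs x \<le> 1 \<Longrightarrow> nabs y \<le> 1 \<Longrightarrow> red (x - y) = red x - red (y :: 'a::nonarch_field)"
  unfolding red_def by (simp add: minus_res.abs_eq resrel_def)

lemma red_eq_0_iff: "nabs x \<le> 1 \<Longrightarrow> red x = 0 \<longleftrightarrow> nabs (x :: 'a::nonarch_field) < 1"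
  unfolding red_def zero_res_def using Quotient_rel[OF Quotient_res, of x 0]
    by (auto simp: resrel_def)

lemma red_0 [simp]: "red (0::'a::nonarch_field) = 0"
  unfolding red_def zero_res_def ..

lemma red_1 [simp]: "red (1::'a::nonarch_field) = 1"
  unfolding red_def one_res_def ..

lemma nabs_of_nat_le_1: "nabs (of_nat n :: 'a::nonarch_field) \<le> 1"
proof (induction n)
  case (Suc n)
  then show ?case using nabs_ultra[of "1::'a" "of_nat n"] by (simp add: add.commute)
qed simp

lemma red_of_nat: "red (of_nat n :: 'a::nonarch_field) = of_nat n"
proof (induction n)
  case (Suc n)
  then show ?case using red_add[of "1::'a" "of_nat n"] nabs_of_nat_le_1[of n]
    by (simp add: add.commute)
qed simp

lemma nabs_mult_le_1: "nabs x \<le> 1 \<Longrightarrow> nabs y \<le> 1 \<Longrightarrow> nabs (x * y :: 'a::nonarch_field) \<le> 1"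
  by (simp add: nabs_mult mult_le_one nabs_nonneg)

lemma nabs_sum_le:
  "finite A \<Longrightarrow> (\<And>i. i \<in> A \<Longrightarrow> nabs (f i :: 'a::nonarch_field) \<le> M) \<Longrightarrow> 0 \<le> M \<Longrightarrow> nabs (sum f A) \<le> M"
proof (induction A rule: finite_induct)
  case (insert x F)
  then have "nabs (f x) \<le> M" "nabs (sum f F) \<le> M" by simp_all
  then show ?case using insert(1,2) nabs_ultra[of "f x" "sum f F"] by simp
qed simp

definition integral_poly :: "'a::nonarch_field poly \<Rightarrow> bool" where
  "integral_poly p \<longleftrightarrow> (\<forall>i. nabs (coeff p i) \<le> 1)"

lemma integral_poly_pCons: "integral_poly (pCons a p) \<longleftrightarrow> nabs a \<le> 1 \<and> integral_poly p"
  unfolding integral_poly_def by (auto simp: coeff_pCons split: nat.splits)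

lemma integral_poly_diff: "integral_poly p \<Longrightarrow> integral_poly q \<Longrightarrow> integral_poly (p - q)"
  unfolding integral_poly_def by (simp add: order_trans[OF nabs_diff])

lemma integral_poly_mult: "integral_poly p \<Longrightarrow> integral_poly q \<Longrightarrow> integral_poly (p * q)"
  unfolding integral_poly_def coeff_mult by (auto intro!: nabs_sum_le nabs_mult_le_1)

lemma integral_poly_smult: "nabs c \<le> 1 \<Longrightarrow> integral_poly p \<Longrightarrow> integral_poly (smult c p)"
  unfolding integral_poly_def by (simp add: nabs_mult_le_1)

lemma integral_poly_pderiv: "integral_poly p \<Longrightarrow> integral_poly (pderiv p)"
  unfolding integral_poly_def coeff_pderiv by (metis nabs_mult_le_1 nabs_of_nat_le_1)

lemma nabs_poly_le_1: "integral_poly p \<Longrightarrow> nabs x \<le> 1 \<Longrightarrow> nabs (poly p x) \<le> 1"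
proof (induction p)
  case (pCons a p)
  then have "nabs (x * poly p x) \<le> 1" "nabs a \<le> 1"
    by (auto simp: integral_poly_pCons nabs_mult_le_1)
  then show ?case using nabs_ultra[of a "x * poly p x"] by simp
qed simp

lemma integral_poly_synthetic_div:
  "integral_poly p \<Longrightarrow> nabs c \<le> 1 \<Longrightarrow> integral_poly (synthetic_div p c)"
  by (induction p) (simp_all add: integral_poly_pCons nabs_poly_le_1)

lemma red_poly: "integral_poly p \<Longrightarrow> nabs x \<le> 1 \<Longrightarrow> red (poly p x) = poly (map_poly red p) (red x)"
proof (induction p)
  case (pCons a p)
  then have "nabs a \<le> 1" "integral_poly p" "nabs (poly p x) \<le> 1"
    by (auto simp: integral_poly_pCons nabs_poly_le_1)
  with pCons show ?case by (simp add: red_add red_mult nabs_mult_le_1 map_poly_pCons)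
qed simp

lemma map_poly_red_pderiv: "integral_poly p \<Longrightarrow> map_poly red (pderiv p) = pderiv (map_poly red p)"
  by (rule poly_eqI)
    (simp add: coeff_map_poly coeff_pderiv integral_poly_def red_mult nabs_of_nat_le_1 red_of_nat
      del: of_nat_Suc)

section \<open>Multiplicative seminorms\<close>

context
  fixes z :: "'a::nonarch_field poly \<Rightarrow> real"
  assumes z: "mult_seminorm z"
begin

lemma mult_seminorm_nonneg: "0 \<le> z f"
  using z by (simp add: mult_seminorm_def)

lemma mult_seminorm_mult: "z (f * g) = z f * z g"
  using z by (simp add: mult_seminorm_def)

lemma mult_seminorm_triangle: "z (f + g) \<le> z f + z g"
  using z by (simp add: mult_seminorm_def)

lemma mult_seminorm_const: "z [:c:] = nabs c"
  using z by (simp add: mult_seminorm_def)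

lemma mult_seminorm_0: "z 0 = 0"
  using mult_seminorm_const[of 0] by simp

lemma mult_seminorm_1: "z 1 = 1"
  using mult_seminorm_const[of 1] by (simp add: one_pCons)

lemma mult_seminorm_smult: "z (smult c f) = nabs c * z f"
  using mult_seminorm_mult[of "[:c:]" f] by (simp add: mult_seminorm_const)

lemma mult_seminorm_power: "z (f ^ n) = z f ^ n"
  by (induction n) (simp_all add: mult_seminorm_1 mult_seminorm_mult)

lemma mult_seminorm_sum_le: "finite A \<Longrightarrow> z (sum f A) \<le> (\<Sum>i\<in>A. z (f i))"
proof (induction A rule: finite_induct)
  case (insert x F)
  then show ?case using mult_seminorm_triangle[of "f x" "sum f F"] by simp
qed (simp add: mult_seminorm_0)

text \<open>Since integers have absolute value at most 1, the binomial expansion gives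
  \<open>z (f + g) ^ n \<le> (n + 1) * max (z f) (z g) ^ n\<close> for all \<open>n\<close>.\<close>

lemma mult_seminorm_ultra: "z (f + g) \<le> max (z f) (z g)"
proof (rule ccontr)
  define M where "M = max (z f) (z g)"
  define x where "x = z (f + g)"
  assume "\<not> z (f + g) \<le> max (z f) (z g)"
  then have Mx: "M < x" unfolding M_def x_def by linarith
  have M0: "0 \<le> M" by (simp add: M_def le_max_iff_disj mult_seminorm_nonneg)
  have bound: "x ^ n \<le> (real n + 1) * M ^ n" for n
  proof -
    have "x ^ n = z ((f + g) ^ n)" by (simp add: x_def mult_seminorm_power)
    also have "\<dots> = z (\<Sum>k\<le>n. of_nat (n choose k) * f ^ k * g ^ (n - k))"
      by (simp add: binomial_ring)
    also have "\<dots> \<le> (\<Sum>k\<le>n. z (of_nat (n choose k) * f ^ k * g ^ (n - k)))"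
      by (simp add: mult_seminorm_sum_le)
    also have "\<dots> \<le> (\<Sum>k\<le>n. M ^ n)"
    proof (rule sum_mono)
      fix k assume k: "k \<in> {..n}"
      have "z (of_nat (n choose k) * f ^ k * g ^ (n - k))
          = nabs (of_nat (n choose k) :: 'a) * (z f ^ k * z g ^ (n - k))"
        by (simp only: of_nat_poly mult_seminorm_mult mult_seminorm_const mult_seminorm_power
            mult.assoc)
      also have "\<dots> \<le> 1 * (M ^ k * M ^ (n - k))"
        using nabs_of_nat_le_1 M0
          by (intro mult_mono power_mono) (auto simp: M_def mult_seminorm_nonneg)
      also have "\<dots> = M ^ n" using k by (simp add: power_add[symmetric])
      finally show "z (of_nat (n choose k) * f ^ k * g ^ (n - k)) \<le> M ^ n" .
    qed
    finally show ?thesis by (simp add: add.commute)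
  qed
  define q where "q = M / x"
  have q: "0 \<le> q" "q < 1" using M0 Mx by (simp_all add: q_def)
  have "1 \<le> (real n + 1) * q ^ n" for n
    using bound[of n] M0 Mx by (simp add: q_def power_divide field_simps)
  moreover have "(\<lambda>n. (real n + 1) * q ^ n) \<longlonglongrightarrow> 0"
    using tendsto_add[OF powser_times_n_limit_0 LIMSEQ_power_zero, of q q] q
    by (simp add: distrib_right)
  ultimately have "1 \<le> (0::real)" by (intro LIMSEQ_le_const) auto
  then show False by simp
qed

lemma mult_seminorm_minus: "z (- f) = z f"
  using mult_seminorm_smult[of "-1" f] by simp

lemma mult_seminorm_diff: "z (f - g) \<le> max (z f) (z g)"
  using mult_seminorm_ultra[of f "- g"] by (simp add: mult_seminorm_minus)

lemma mult_seminorm_add_eq: "z g < z f \<Longrightarrow> z (f + g) = z f"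
  using mult_seminorm_diff[of "f + g" g] mult_seminorm_ultra[of f g]
    by (auto simp: max_def split: if_splits)

lemma nabs_diff_le_mult_seminorm: "nabs (b - c) \<le> max (z [:-b,1:]) (z [:-c,1:])"
  using mult_seminorm_diff[of "[:-c,1:]" "[:-b,1:]"] by (simp add: mult_seminorm_const)

lemma mult_seminorm_linear_le: "z [:-c,1:] \<le> max (z [:-b,1:]) (nabs (b - c))"
  using mult_seminorm_ultra[of "[:-b,1:]" "[:b - c:]"] by (simp add: mult_seminorm_const)

lemma mult_seminorm_integral_le_1: "z [:0,1:] \<le> 1 \<Longrightarrow> integral_poly p \<Longrightarrow> z p \<le> 1"
proof (induction p)
  case (pCons a p)
  have "z ([:0,1:] * p) = z [:0,1:] * z p" by (rule mult_seminorm_mult)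
  then have "z ([:0,1:] * p) \<le> 1" "z [:a:] \<le> 1"
    using pCons
      by (simp_all add: integral_poly_pCons mult_le_one mult_seminorm_nonneg mult_seminorm_const)
  moreover have "pCons a p = [:a:] + [:0,1:] * p" by simp
  ultimately show ?case using mult_seminorm_ultra[of "[:a:]" "[:0,1:] * p"] by simp
qed (simp add: mult_seminorm_0)

end

section \<open>Contraction near a fixed critical direction\<close>

lemma minus_const_eq_synthetic_div:
  "p - [:poly p c:] = [:-c, 1:] * synthetic_div p (c :: 'a::comm_ring_1)"
  using synthetic_div_correct'[of c p] by (metis add_diff_cancel_right')

lemma poly_synthetic_div_self: "poly (synthetic_div p c) c = poly (pderiv p) (c :: 'a::idom)"
proof -
  have "poly (pderiv p) c = poly (pderiv ([:-c, 1:] * synthetic_div p c + [:poly p c:])) c"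
    by (simp only: synthetic_div_correct')
  also have "\<dots> = poly (synthetic_div p c) c"
    by (simp only: pderiv_add pderiv_mult) (simp add: pderiv_pCons)
  finally show ?thesis by simp
qed

lemma nabs_poly_diff_le:
  assumes "integral_poly p" "nabs a \<le> 1" "nabs c \<le> 1"
  shows "nabs (poly p c - poly p a) \<le> nabs (c - a)"
proof -
  have "poly p c - poly p a = (c - a) * poly (synthetic_div p a) c"
    using arg_cong[OF minus_const_eq_synthetic_div[of p a], of "\<lambda>q. poly q c"]
    by (simp add: algebra_simps)
  moreover have "nabs (poly (synthetic_div p a) c) \<le> 1"
    using assms by (intro nabs_poly_le_1 integral_poly_synthetic_div)
  ultimately show ?thesis by (simp add: nabs_mult mult_left_le nabs_nonneg)
qed

lemma mult_seminorm_minus_const_le: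
  assumes z: "mult_seminorm z" and zX: "z [:0,1:] \<le> 1" and p: "integral_poly p" and a: "nabs a \<le> 1"
  shows "z (p - [:poly p a:]) \<le> z [:-a,1:]"
proof -
  have "z (synthetic_div p a) \<le> 1"
    by (rule mult_seminorm_integral_le_1[OF z zX integral_poly_synthetic_div[OF p a]])
  then show ?thesis
    unfolding minus_const_eq_synthetic_div mult_seminorm_mult[OF z]
    by (simp add: mult_left_le mult_seminorm_nonneg[OF z])
qed

text \<open>The derivative of \<open>P / Q\<close> is \<open>wronskian P Q / Q\<^sup>2\<close>.\<close>

definition wronskian :: "'a::idom poly \<Rightarrow> 'a poly \<Rightarrow> 'a poly" where
  "wronskian P Q = Q * pderiv P - P * pderiv Q"

lemma integral_poly_wronskian: "integral_poly P \<Longrightarrow> integral_poly Q \<Longrightarrow> integral_poly (wronskian P Q)"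
  unfolding wronskian_def by (intro integral_poly_diff integral_poly_mult integral_poly_pderiv)

lemma red_poly_wronskian:
  assumes P: "integral_poly P" and Q: "integral_poly Q" and a: "nabs a \<le> 1"
  shows "red (poly (wronskian P Q) a) = poly (wronskian (map_poly red P) (map_poly red Q)) (red a)"
proof -
  have "nabs (poly p a) \<le> 1" "red (poly p a) = poly (map_poly red p) (red a)"
    "red (poly (pderiv p) a) = poly (pderiv (map_poly red p)) (red a)"
    if "integral_poly p" for p
    using that a by (simp_all add: nabs_poly_le_1 red_poly integral_poly_pderiv
        flip: map_poly_red_pderiv)
  note reduced = this[OF P] this[OF Q] nabs_poly_le_1[OF integral_poly_pderiv[OF P] a]
    nabs_poly_le_1[OF integral_poly_pderiv[OF Q] a]
  show ?thesis
    by (simp add: wronskian_def reduced red_diff red_mult nabs_mult_le_1)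
qed

lemma poly_wronskian_double_fixed:
  fixes A B :: "'a::idom poly"
  assumes "[:-t,1:]^2 dvd A - smult t B"
  shows "poly (wronskian A B) t = 0"
proof -
  obtain K where K: "A - smult t B = [:-t,1:]^2 * K" using assms by (elim dvdE)
  have "poly A t = t * poly B t"
    using arg_cong[OF K, of "\<lambda>p. poly p t"] by simp
  moreover have "poly (pderiv A) t = t * poly (pderiv B) t"
  proof -
    have "poly (pderiv (A - smult t B)) t = 0"
      unfolding K by (simp only: power2_eq_square pderiv_mult poly_add poly_mult) simp
    then show ?thesis by (simp add: pderiv_diff pderiv_smult)
  qed
  ultimately show ?thesis by (simp add: wronskian_def)
qed

lemma smult_cross_eq_synthetic_div:
  "smult (poly Q c) P - smult (poly P c) Q =
     [:-c,1:] * (smult (poly Q c) (synthetic_div P c)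
       - smult (poly P c) (synthetic_div Q (c :: 'a::comm_ring_1)))"
proof -
  have "smult (poly Q c) P - smult (poly P c) Q =
      smult (poly Q c) ([:-c, 1:] * synthetic_div P c + [:poly P c:])
      - smult (poly P c) ([:-c, 1:] * synthetic_div Q c + [:poly Q c:])"
    by (simp only: synthetic_div_correct')
  then show ?thesis by (simp add: smult_add_right right_diff_distrib mult.commute)
qed

lemma poly_cross_synthetic_div:
  "poly (smult (poly Q c) (synthetic_div P c) - smult (poly P c) (synthetic_div Q c)) c =
     poly (wronskian P Q) (c :: 'a::idom)"
  by (simp add: wronskian_def poly_synthetic_div_self)

lemma nabs_poly_unit_near:
  assumes Q: "integral_poly Q" and a: "nabs a \<le> 1" and ca: "nabs (c - a) < 1"
    and Qa: "nabs (poly Q a) = 1"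
  shows "nabs c \<le> 1" "nabs (poly Q c) = 1"
proof -
  show c: "nabs c \<le> 1" using nabs_ultra[of "c - a" a] ca a by simp
  have "nabs (poly Q c - poly Q a) < nabs (poly Q a)"
    using nabs_poly_diff_le[OF Q a c] ca Qa by simp
  then show "nabs (poly Q c) = 1" using nabs_strict[of "poly Q c - poly Q a" "poly Q a"] Qa by simp
qed

lemma mult_seminorm_unit_poly:
  assumes z: "mult_seminorm z" and Q: "integral_poly Q" and a: "nabs a \<le> 1"
    and za: "z [:-a,1:] < 1" and Qa: "nabs (poly Q a) = 1"
  shows "z Q = 1"
proof -
  have "z [:0,1:] \<le> 1" using mult_seminorm_linear_le[OF z, of 0 a] za a by simp
  then have "z (Q - [:poly Q a:]) < z [:poly Q a:]"
    using mult_seminorm_minus_const_le[OF z _ Q a] za Qa by (simp add: mult_seminorm_const[OF z])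
  then show ?thesis
    using mult_seminorm_add_eq[OF z, of "Q - [:poly Q a:]" "[:poly Q a:]"] Qa
    by (simp add: mult_seminorm_const[OF z])
qed

lemma fixed_seminorm_contraction:
  fixes z :: "'a::nonarch_field poly \<Rightarrow> real"
  assumes z: "mult_seminorm z" and P: "integral_poly P" and Q: "integral_poly Q"
    and a: "nabs a \<le> 1" and za: "z [:-a,1:] < 1" and Qa: "nabs (poly Q a) = 1"
    and fixed: "\<And>c. z [:-c,1:] * z Q = z (P - smult c Q)"
    and c: "z [:-c,1:] \<le> z [:-a,1:]"
  shows "z [:-(poly P c / poly Q c), 1:]
    \<le> max (nabs (poly (wronskian P Q) a)) (z [:-a,1:]) * z [:-c,1:]"
proof -
  define \<kappa> where "\<kappa> = max (nabs (poly (wronskian P Q) a)) (z [:-a,1:])"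
  have zX: "z [:0,1:] \<le> 1"
    using mult_seminorm_linear_le[OF z, of 0 a] za a by simp
  have ca: "nabs (c - a) \<le> z [:-a,1:]"
    using nabs_diff_le_mult_seminorm[OF z, of c a] c by simp
  then have c1: "nabs c \<le> 1" and Qc: "nabs (poly Q c) = 1"
    using nabs_poly_unit_near[OF Q a _ Qa, of c] za by simp_all
  have zQ: "z Q = 1" by (rule mult_seminorm_unit_poly[OF z Q a za Qa])
  define H where "H = smult (poly Q c) (synthetic_div P c) - smult (poly P c) (synthetic_div Q c)"
  have H: "integral_poly H"
    unfolding H_def using P Q c1
    by (auto intro!: integral_poly_diff integral_poly_smult nabs_poly_le_1
        integral_poly_synthetic_div)
  have "nabs (poly H c) \<le> \<kappa>"
  proof -
    have "nabs (poly (wronskian P Q) c - poly (wronskian P Q) a) \<le> z [:-a,1:]"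
      using nabs_poly_diff_le[OF integral_poly_wronskian[OF P Q] a c1] ca by simp
    then show ?thesis
      using nabs_ultra[of "poly (wronskian P Q) a"
          "poly (wronskian P Q) c - poly (wronskian P Q) a"]
      unfolding H_def poly_cross_synthetic_div \<kappa>_def by simp
  qed
  moreover have "z (H - [:poly H c:]) \<le> \<kappa>"
    using mult_seminorm_minus_const_le[OF z zX H c1] c by (simp add: \<kappa>_def)
  ultimately have zH: "z H \<le> \<kappa>"
    using mult_seminorm_ultra[OF z, of "[:poly H c:]" "H - [:poly H c:]"]
    by (simp add: mult_seminorm_const[OF z])
  have "smult (poly Q c) (P - smult (poly P c / poly Q c) Q)
      = smult (poly Q c) P - smult (poly P c) Q"
    using Qc by (auto simp: smult_diff_right)
  also have "\<dots> = [:-c,1:] * H"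
    unfolding H_def by (rule smult_cross_eq_synthetic_div)
  finally have "smult (poly Q c) (P - smult (poly P c / poly Q c) Q) = [:-c,1:] * H" .
  then have "z (P - smult (poly P c / poly Q c) Q) = z [:-c,1:] * z H"
    using arg_cong[of _ _ z] Qc by (metis mult_seminorm_smult[OF z] mult_seminorm_mult[OF z] mult_1)
  then have "z [:-(poly P c / poly Q c), 1:] = z [:-c,1:] * z H"
    using fixed[of "poly P c / poly Q c"] zQ by simp
  also have "\<dots> \<le> \<kappa> * z [:-c,1:]"
    using zH mult_seminorm_nonneg[OF z] by (simp add: mult_right_mono mult.commute)
  finally show ?thesis unfolding \<kappa>_def .
qed

lemma mult_seminorm_linear_zero_if_approx:
  fixes z :: "'a::nonarch_field poly \<Rightarrow> real"
  assumes z: "mult_seminorm z" and complete: "nabs_complete TYPE('a)"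
    and b: "\<And>n. z [:-b n,1:] < inverse (real (Suc n))"
  shows "\<exists>l. z [:-l,1:] = 0"
proof -
  have small: "\<exists>N. \<forall>n\<ge>N. z [:-b n,1:] < e" if e: "0 < e" for e
    using order_tendstoD(2)[OF LIMSEQ_inverse_real_of_nat e] less_trans[OF b]
    by (auto simp: eventually_sequentially)
  have "\<exists>N. \<forall>m\<ge>N. \<forall>n\<ge>N. nabs (b m - b n) < e" if e: "0 < e" for e
  proof -
    obtain N where N: "\<forall>n\<ge>N. z [:-b n,1:] < e" using small[OF e] by blast
    have "nabs (b m - b n) < e" if "N \<le> m" "N \<le> n" for m n
    proof -
      have "z [:-b m,1:] < e" "z [:-b n,1:] < e" using N that by auto
      then show ?thesis using nabs_diff_le_mult_seminorm[OF z, of "b m" "b n"] by simp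
    qed
    then show ?thesis by blast
  qed
  then obtain l where l: "\<forall>e>0. \<exists>N. \<forall>n\<ge>N. nabs (b n - l) < e"
    using complete unfolding nabs_complete_def by blast
  have "z [:-l,1:] < e" if e: "0 < e" for e
  proof -
    obtain N1 N2 where "\<forall>n\<ge>N1. nabs (b n - l) < e" "\<forall>n\<ge>N2. z [:-b n,1:] < e"
      using l small e by blast
    then have "nabs (b (max N1 N2) - l) < e" "z [:-b (max N1 N2),1:] < e" by auto
    then show ?thesis using mult_seminorm_linear_le[OF z, of l "b (max N1 N2)"] by simp
  qed
  then have "z [:-l,1:] = 0"
    using mult_seminorm_nonneg[OF z, of "[:-l,1:]"] by (metis less_irrefl order_le_less)
  then show ?thesis ..
qed

lemma mult_seminorm_INF_linear_pos:
  fixes z :: "'a::nonarch_field poly \<Rightarrow> real"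
  assumes z: "mult_seminorm z" and complete: "nabs_complete TYPE('a)"
    and norm: "\<And>f. f \<noteq> 0 \<Longrightarrow> z f \<noteq> 0"
  shows "0 < (INF b. z [:-b,1:])"
proof (rule ccontr)
  have bdd: "bdd_below (range (\<lambda>b. z [:-b,1:]))"
    unfolding bdd_below_def using mult_seminorm_nonneg[OF z] by blast
  assume "\<not> 0 < (INF b. z [:-b,1:])"
  moreover have "0 \<le> (INF b. z [:-b,1:])"
    by (simp add: cINF_greatest mult_seminorm_nonneg[OF z])
  ultimately have "\<exists>b. z [:-b,1:] < inverse (real (Suc n))" for n
    using cInf_less_iff[OF _ bdd, of "inverse (real (Suc n))"] by auto
  then obtain b where "\<And>n. z [:-b n,1:] < inverse (real (Suc n))" by metis
  then obtain l where "z [:-l,1:] = 0"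
    using mult_seminorm_linear_zero_if_approx[OF z complete] by blast
  then show False using norm[of "[:-l,1:]"] by simp
qed

lemma fixed_seminorm_not_norm:
  fixes z :: "'a::nonarch_field poly \<Rightarrow> real"
  assumes z: "mult_seminorm z" and complete: "nabs_complete TYPE('a)"
    and P: "integral_poly P" and Q: "integral_poly Q"
    and a: "nabs a \<le> 1" and za: "z [:-a,1:] < 1" and Qa: "nabs (poly Q a) = 1"
    and Wa: "nabs (poly (wronskian P Q) a) < 1"
    and fixed: "\<And>c. z [:-c,1:] * z Q = z (P - smult c Q)"
  shows "\<exists>f. f \<noteq> 0 \<and> z f = 0"
proof (rule ccontr)
  define d where "d = (INF b. z [:-b,1:])"
  define \<kappa> where "\<kappa> = max (nabs (poly (wronskian P Q) a)) (z [:-a,1:])"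
  assume "\<nexists>f. f \<noteq> 0 \<and> z f = 0"
  then have d: "0 < d"
    unfolding d_def by (intro mult_seminorm_INF_linear_pos[OF z complete]) auto
  have bdd: "bdd_below (range (\<lambda>b. z [:-b,1:]))"
    unfolding bdd_below_def using mult_seminorm_nonneg[OF z] by blast
  have d_le: "d \<le> z [:-b,1:]" for b
    unfolding d_def by (rule cINF_lower[OF bdd]) simp
  have \<kappa>: "0 < \<kappa>" "\<kappa> < 1"
    using d_le[of a] d Wa za by (auto simp: \<kappa>_def)
  then have "d < d / \<kappa>" using d by (simp add: less_divide_eq)
  then obtain b where b: "z [:-b,1:] < d / \<kappa>"
    using cInf_less_iff[OF _ bdd] unfolding d_def by auto
  define c where "c = (if z [:-b,1:] \<le> z [:-a,1:] then b else a)"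
  have c: "z [:-c,1:] \<le> z [:-a,1:]" "z [:-c,1:] < d / \<kappa>"
    using b by (auto simp: c_def)
  have "z [:-(poly P c / poly Q c), 1:] \<le> \<kappa> * z [:-c,1:]"
    unfolding \<kappa>_def by (rule fixed_seminorm_contraction[OF z P Q a za Qa fixed c(1)])
  also have "\<dots> < d"
    using c(2) \<kappa> by (simp add: less_divide_eq mult.commute)
  finally show False using d_le[of "poly P c / poly Q c"] by simp
qed

lemma mult_seminorm_linear_kernel:
  fixes z :: "'a::nonarch_field poly \<Rightarrow> real"
  assumes z: "mult_seminorm z" and closed: "alg_closed TYPE('a)"
  shows "h \<noteq> 0 \<Longrightarrow> z h = 0 \<Longrightarrow> \<exists>c. z [:-c,1:] = 0"
proof (induction "degree h" arbitrary: h rule: less_induct)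
  case less
  show ?case
  proof (cases "degree h = 0")
    case True
    then obtain c where "h = [:c:]" "c \<noteq> 0" using less.prems(1) by (metis degree_0_id pCons_0_0)
    then show ?thesis using less.prems(2) by (simp add: mult_seminorm_const[OF z] nabs_eq_0_iff)
  next
    case False
    then have "1 \<le> degree h" by simp
    then obtain r where "poly h r = 0" using closed unfolding alg_closed_def by blast
    then have h: "h = [:-r,1:] * synthetic_div h r"
      using minus_const_eq_synthetic_div[of h r] by simp
    then have "z [:-r,1:] = 0 \<or> z (synthetic_div h r) = 0"
      using less.prems(2) mult_seminorm_mult[OF z] by (metis mult_eq_0_iff)
    moreover have "synthetic_div h r \<noteq> 0" using h less.prems(1) by auto
    moreover have "degree (synthetic_div h r) < degree h" using False
      by (simp add: degree_synthetic_div)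
    ultimately show ?thesis using less.hyps by blast
  qed
qed

lemma mult_seminorm_eq_eval:
  fixes z :: "'a::nonarch_field poly \<Rightarrow> real"
  assumes z: "mult_seminorm z" and c: "z [:-c,1:] = 0"
  shows "z = (\<lambda>f. nabs (poly f c))"
proof
  fix f
  have "z (f - [:poly f c:]) = 0"
    unfolding minus_const_eq_synthetic_div mult_seminorm_mult[OF z] c by simp
  then show "z f = nabs (poly f c)"
    using mult_seminorm_ultra[OF z, of "[:poly f c:]" "f - [:poly f c:]"]
      mult_seminorm_diff[OF z, of f "f - [:poly f c:]"]
    by (simp add: mult_seminorm_const[OF z] mult_seminorm_nonneg[OF z] nabs_nonneg)
qed

lemma is_type1_if_kernel:
  assumes "mult_seminorm z" "alg_closed TYPE('a)" "h \<noteq> 0" "z h = 0"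
  shows "is_type1 (Some (z :: 'a::nonarch_field poly \<Rightarrow> real))"
  using mult_seminorm_linear_kernel[OF assms] mult_seminorm_eq_eval[OF assms(1)]
  by (auto simp: is_type1_def type1pt_def)

section \<open>Inversion\<close>

text \<open>For \<open>degree p \<le> N\<close>, \<open>reflect_deg N p\<close> is \<open>T\<^sup>N p(1/T)\<close>, and \<open>inversion_seminorm z\<close>
  is the seminorm \<open>g \<mapsto> z (g (1/T))\<close> of the image of the point \<open>z\<close> under \<open>T \<mapsto> 1/T\<close>.\<close>

definition reflect_deg :: "nat \<Rightarrow> 'a::comm_ring_1 poly \<Rightarrow> 'a poly" where
  "reflect_deg N p = monom 1 (N - degree p) * reflect_poly p"

lemma coeff_reflect_deg:
  "degree p \<le> N \<Longrightarrow> coeff (reflect_deg N p) j = (if j \<le> N then coeff p (N - j) else 0)"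
  unfolding reflect_deg_def coeff_monom_mult coeff_reflect_poly by (auto simp: coeff_eq_0)

lemma degree_reflect_deg: "degree p \<le> N \<Longrightarrow> degree (reflect_deg N p) \<le> N"
  by (rule degree_le) (simp add: coeff_reflect_deg)

lemma reflect_deg_reflect_deg: "degree p \<le> N \<Longrightarrow> reflect_deg N (reflect_deg N p) = p"
  by (rule poly_eqI) (auto simp: coeff_reflect_deg degree_reflect_deg coeff_eq_0)

lemma reflect_deg_add:
  "degree p \<le> N \<Longrightarrow> degree q \<le> N \<Longrightarrow> reflect_deg N (p + q) = reflect_deg N p + reflect_deg N q"
  by (rule poly_eqI) (simp add: coeff_reflect_deg degree_add_le)

lemma reflect_deg_diff:
  "degree p \<le> N \<Longrightarrow> degree q \<le> N \<Longrightarrow> reflect_deg N (p - q) = reflect_deg N p - reflect_deg N q"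
  by (rule poly_eqI) (simp add: coeff_reflect_deg degree_diff_le)

lemma reflect_deg_smult: "degree p \<le> N \<Longrightarrow> reflect_deg N (smult c p) = smult c (reflect_deg N p)"
  by (rule poly_eqI) (simp add: coeff_reflect_deg le_trans[OF degree_smult_le])

lemma reflect_deg_linear: "reflect_deg 1 [:-c, 1:] = [:1, -c:]"
  by (rule poly_eqI) (simp add: coeff_reflect_deg coeff_pCons split: nat.split)

lemma integral_poly_reflect_deg: "integral_poly p \<Longrightarrow> degree p \<le> N \<Longrightarrow> integral_poly (reflect_deg N p)"
  unfolding integral_poly_def by (simp add: coeff_reflect_deg)

lemma poly_wronskian_reflect_deg_0:
  assumes "1 \<le> D" "degree P \<le> D" "degree Q \<le> D"
  shows "poly (wronskian (reflect_deg D Q) (reflect_deg D P)) 0 =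
    coeff P D * coeff Q (D - 1) - coeff Q D * coeff P (D - 1)"
  using assms by (simp add: wronskian_def poly_0_coeff_0 coeff_mult coeff_pderiv coeff_reflect_deg)

definition inversion_seminorm :: "('a::nonarch_field poly \<Rightarrow> real) \<Rightarrow> 'a poly \<Rightarrow> real" where
  "inversion_seminorm z g = z (reflect_poly g) / z [:0,1:] ^ degree g"

context
  fixes z :: "'a::nonarch_field poly \<Rightarrow> real"
  assumes z: "mult_seminorm z" and zX: "0 < z [:0,1:]"
begin

lemma inversion_seminorm_eq:
  assumes "degree g \<le> N"
  shows "inversion_seminorm z g = z (reflect_deg N g) / z [:0,1:] ^ N"
proof -
  have "z [:0,1:] ^ N = z [:0,1:] ^ (N - degree g) * z [:0,1:] ^ degree g"
    using assms by (simp flip: power_add)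
  then show ?thesis
    using zX by (simp add: inversion_seminorm_def reflect_deg_def mult_seminorm_mult[OF z]
        mult_seminorm_power[OF z] monom_altdef mult_seminorm_smult[OF z])
qed

lemma inversion_seminorm_reflect_deg:
  "degree p \<le> N \<Longrightarrow> inversion_seminorm z (reflect_deg N p) = z p / z [:0,1:] ^ N"
  using inversion_seminorm_eq[OF degree_reflect_deg, of p N] by (simp add: reflect_deg_reflect_deg)

lemma inversion_seminorm_X: "inversion_seminorm z [:0,1:] = 1 / z [:0,1:]"
proof -
  have "reflect_poly [:0,1::'a:] = 1"
    by (rule poly_eqI) (simp add: coeff_reflect_poly coeff_pCons split: nat.splits)
  then show ?thesis by (simp add: inversion_seminorm_def mult_seminorm_1[OF z])
qed

lemma inversion_seminorm_linear: "inversion_seminorm z [:-c,1:] = z [:1,-c:] / z [:0,1:]"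
proof -
  have "inversion_seminorm z [:-c,1:] = z (reflect_deg 1 [:-c,1:]) / z [:0,1:] ^ 1"
    by (rule inversion_seminorm_eq) simp
  then show ?thesis unfolding reflect_deg_linear by simp
qed

lemma mult_seminorm_inversion: "mult_seminorm (inversion_seminorm z)"
proof -
  have ultra: "inversion_seminorm z (f + g) \<le> max (inversion_seminorm z f) (inversion_seminorm z g)"
    for f g
  proof -
    define N where "N = max (degree f) (degree g)"
    have f: "degree f \<le> N" and g: "degree g \<le> N" and fg: "degree (f + g) \<le> N"
      unfolding N_def by (auto simp: degree_add_le)
    have "inversion_seminorm z (f + g) = z (reflect_deg N f + reflect_deg N g) / z [:0,1:] ^ N"
      by (simp add: inversion_seminorm_eq[OF fg] reflect_deg_add[OF f g])
    also have "\<dots> \<le> max (z (reflect_deg N f)) (z (reflect_deg N g)) / z [:0,1:] ^ N"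
      using zX by (intro divide_right_mono mult_seminorm_ultra[OF z]) simp
    also have "\<dots> = max (inversion_seminorm z f) (inversion_seminorm z g)"
      using zX
        by (simp add: inversion_seminorm_eq[OF f] inversion_seminorm_eq[OF g]
            max_divide_distrib_right)
    finally show ?thesis .
  qed
  show ?thesis
    unfolding mult_seminorm_def
  proof (intro conjI allI)
    fix f g :: "'a poly"
    show nonneg: "0 \<le> inversion_seminorm z f" for f
      using zX by (simp add: inversion_seminorm_def mult_seminorm_nonneg[OF z])
    show "inversion_seminorm z (f * g) = inversion_seminorm z f * inversion_seminorm z g"
      by (cases "f = 0 \<or> g = 0")
        (auto simp: inversion_seminorm_def reflect_poly_mult degree_mult_eq mult_seminorm_mult[OF z]
          mult_seminorm_0[OF z] power_add)
    show "inversion_seminorm z (f + g) \<le> inversion_seminorm z f + inversion_seminorm z g"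
      using ultra[of f g] nonneg[of f] nonneg[of g] by linarith
  next
    fix c
    show "inversion_seminorm z [:c:] = nabs c"
      by (simp add: inversion_seminorm_def mult_seminorm_const[OF z])
  qed
qed

lemma inversion_seminorm_fixed:
  assumes P: "degree P \<le> D" and Q: "degree Q \<le> D"
    and fixed: "\<And>c. z [:-c,1:] * z Q = z (P - smult c Q)"
  shows "inversion_seminorm z [:-c,1:] * inversion_seminorm z (reflect_deg D P)
    = inversion_seminorm z (reflect_deg D Q - smult c (reflect_deg D P))"
proof -
  have zP: "z P = z [:0,1:] * z Q" using fixed[of 0] by simp
  have "z [:1,-c:] * z P = z [:0,1:] * z (Q - smult c P)"
  proof (cases "c = 0")
    case True
    then show ?thesis using zP by (simp add: mult_seminorm_1[OF z] flip: one_pCons)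
  next
    case False
    have linear: "[:1,-c:] = smult (-c) [:-(inverse c), 1:]" using False by simp
    have "z [:1,-c:] * z P = nabs c * (z [:-(inverse c), 1:] * z Q) * z [:0,1:]"
      unfolding linear mult_seminorm_smult[OF z] zP by simp
    also have "\<dots> = nabs c * z (P - smult (inverse c) Q) * z [:0,1:]"
      by (simp only: fixed)
    also have "nabs c * z (P - smult (inverse c) Q) = z (Q - smult c P)"
      using False mult_seminorm_smult[OF z, of c "P - smult (inverse c) Q"]
        mult_seminorm_minus[OF z, of "Q - smult c P"]
      by (simp add: smult_diff_right)
    finally show ?thesis by simp
  qed
  moreover have "degree (Q - smult c P) \<le> D"
    using P Q by (meson degree_diff_le degree_smult_le order_trans)
  ultimately show ?thesis
    using zX P Q by (simp add: inversion_seminorm_linear inversion_seminorm_reflect_deg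
        flip: reflect_deg_smult reflect_deg_diff)
qed

end

lemma normalized_scalar_exists:
  fixes P Q :: "'a::nonarch_field poly"
  assumes "P \<noteq> 0 \<or> Q \<noteq> 0"
  shows "\<exists>c. c \<noteq> 0 \<and> normalized (smult c P) (smult c Q)"
proof -
  define C where "C = coeff P ` {..degree P} \<union> coeff Q ` {..degree Q}"
  have "Max (nabs ` C) \<in> nabs ` C" by (rule Max_in) (auto simp: C_def)
  then obtain x where x: "x \<in> C" "nabs x = Max (nabs ` C)" by auto
  have bound: "nabs (coeff R i) \<le> nabs x" if "R \<in> {P, Q}" for R i
  proof (cases "i \<le> degree R")
    case True
    then show ?thesis unfolding x(2) using that by (intro Max_ge) (auto simp: C_def)
  qed (simp add: coeff_eq_0 nabs_nonneg)
  have "x \<noteq> 0"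
  proof
    assume "x = 0"
    then have "nabs (coeff R i) = 0" if "R \<in> {P, Q}" for R i
      using bound[OF that, of i] nabs_nonneg[of "coeff R i"] by simp
    then have "coeff P i = 0 \<and> coeff Q i = 0" for i by (simp add: nabs_eq_0_iff)
    then show False using assms by (metis leading_coeff_0_iff)
  qed
  then have nx: "0 < nabs x" using nabs_nonneg[of x] by (simp add: order_less_le nabs_eq_0_iff)
  have scaled: "nabs (coeff (smult (inverse x) R) i) = nabs (coeff R i) / nabs x" for R i
    using \<open>x \<noteq> 0\<close> by (simp add: nabs_mult nabs_inverse divide_inverse mult.commute)
  have "normalized (smult (inverse x) P) (smult (inverse x) Q)"
    unfolding normalized_def scaled using bound nx x(1) by (auto simp: C_def)
  with \<open>x \<noteq> 0\<close> show ?thesis by (intro exI[of _ "inverse x"]) simp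
qed

lemma gcd_eq_1_if_rat_deg_eq:
  fixes A B :: "'a::field_gcd poly"
  assumes "A \<noteq> 0 \<or> B \<noteq> 0" "rat_deg A B \<le> m" "0 < m"
    and "rat_deg (A div gcd A B) (B div gcd A B) = m"
  shows "gcd A B = 1"
proof (rule ccontr)
  define g where "g = gcd A B"
  assume "gcd A B \<noteq> 1"
  then have "\<not> is_unit g"
    unfolding g_def by (metis is_unit_gcd_iff gcd.bottom_left_bottom normalize_gcd)
  moreover have "g \<noteq> 0" using assms(1) by (simp add: g_def)
  ultimately have g: "1 \<le> degree g" by (simp add: is_unit_iff_degree)
  have "degree (X div g) < m" if "g dvd X" "degree X \<le> m" for X
  proof (cases "X div g = 0")
    case False
    then have "degree X = degree g + degree (X div g)"
      using \<open>g \<noteq> 0\<close> that(1) by (metis degree_mult_eq dvd_mult_div_cancel)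
    then show ?thesis using g that(2) by simp
  qed (use assms(3) in simp)
  then have "degree (A div g) < m" "degree (B div g) < m"
    using assms(2) by (auto simp: g_def rat_deg_def)
  then show False using assms(4) by (simp add: rat_deg_def g_def)
qed

lemma good_reduction_normal_form:
  fixes P Q :: "'a::nonarch_field poly"
  assumes good: "good_reduction P Q" and deg: "0 < rat_deg P Q"
  obtains s where "s \<noteq> 0" "integral_poly (smult s P)" "integral_poly (smult s Q)"
    "red_num P Q = map_poly red (smult s P)" "red_den P Q = map_poly red (smult s Q)"
proof -
  have "P \<noteq> 0 \<or> Q \<noteq> 0" using deg by (auto simp: rat_deg_def)
  then obtain s where s: "s \<noteq> 0" "normalized (smult s P) (smult s Q)"
    "red_num0 P Q = map_poly red (smult s P)" "red_den0 P Q = map_poly red (smult s Q)"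
    using someI_ex[OF normalized_scalar_exists]
    by (auto simp: red_num0_def red_den0_def norm_scalar_def)
  define A where "A = map_poly red (smult s P)"
  define B where "B = map_poly red (smult s Q)"
  obtain i where "nabs (coeff (smult s P) i) = 1 \<or> nabs (coeff (smult s Q) i) = 1"
    using s(2) by (auto simp: normalized_def)
  then have "coeff A i \<noteq> 0 \<or> coeff B i \<noteq> 0"
    by (auto simp: A_def B_def coeff_map_poly red_eq_0_iff)
  then have "A \<noteq> 0 \<or> B \<noteq> 0" by auto
  moreover have "rat_deg A B \<le> rat_deg P Q"
    using map_poly_degree_leq[of red "smult s P"] map_poly_degree_leq[of red "smult s Q"] s(1)
    by (auto simp: rat_deg_def A_def B_def)
  ultimately have "gcd A B = 1"
    using good deg s(3,4) unfolding good_reduction_def red_num_def red_den_def A_def B_def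
    by (intro gcd_eq_1_if_rat_deg_eq) auto
  then show thesis
    using that s(1,2) s(3,4) by (auto simp: red_num_def red_den_def normalized_def integral_poly_def
        A_def B_def)
qed

lemma berk_map_fixed_linear:
  fixes z :: "'a::nonarch_field poly \<Rightarrow> real"
  assumes z: "mult_seminorm z" and fixed: "berk_map P Q (Some z) = Some z"
  shows "z [:-c,1:] * z (smult s Q) = z (smult s P - smult c (smult s Q))"
proof -
  have zQ: "z Q \<noteq> 0" and "z = (\<lambda>g. z (comp_num P Q g) / z Q ^ degree g)"
    using fixed unfolding berk_map_def by (auto split: if_splits)
  then have "z [:-c,1:] = z (comp_num P Q [:-c,1:]) / z Q ^ degree [:-c,1::'a:]"
    by metis
  moreover have "comp_num P Q [:-c,1:] = P - smult c Q"
    by (simp add: comp_num_def numeral_2_eq_2)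
  ultimately have "z [:-c,1:] * z Q = z (P - smult c Q)"
    using zQ by simp
  moreover have "smult s P - smult c (smult s Q) = smult s (P - smult c Q)"
    by (simp add: smult_diff_right mult.commute)
  ultimately show ?thesis by (simp add: mult_seminorm_smult[OF z])
qed

lemma fixed_critical_point_finite:
  fixes A B :: "'a::field poly"
  assumes fixed: "rat_eval A B (Some t) = Some t" and critical: "2 \<le> rat_mult A B (Some t)"
  shows "poly B t \<noteq> 0" "poly (wronskian A B) t = 0"
proof -
  show "poly B t \<noteq> 0" using fixed by (auto simp: rat_eval_def split: if_splits)
  with fixed critical have "2 \<le> order t (A - smult t B)"
    by (simp add: rat_mult_def)
  then show "poly (wronskian A B) t = 0"
    by (intro poly_wronskian_double_fixed) (simp add: order_divides)
qed

lemma fixed_critical_point_infinity: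
  fixes A B :: "'a::field poly"
  assumes "rat_eval A B None = None" "2 \<le> rat_mult A B None"
  shows "degree B + 2 \<le> degree A"
  using assms by (auto simp: rat_eval_def rat_mult_def split: if_splits)

lemma fixed_seminorm_in_residue_disk_not_norm:
  fixes z :: "'a::nonarch_field poly \<Rightarrow> real"
  assumes z: "mult_seminorm z" and complete: "nabs_complete TYPE('a)"
    and P: "integral_poly P" and Q: "integral_poly Q"
    and a: "nabs a \<le> 1" and za: "z [:-a,1:] < 1"
    and fixed_dir: "rat_eval (map_poly red P) (map_poly red Q) (Some (red a)) = Some (red a)"
    and critical: "2 \<le> rat_mult (map_poly red P) (map_poly red Q) (Some (red a))"
    and fixed: "\<And>c. z [:-c,1:] * z Q = z (P - smult c Q)"
  shows "\<exists>f. f \<noteq> 0 \<and> z f = 0"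
proof (rule fixed_seminorm_not_norm[OF z complete P Q a za _ _ fixed])
  note reduced = fixed_critical_point_finite[OF fixed_dir critical]
  show "nabs (poly Q a) = 1"
    using reduced(1) nabs_poly_le_1[OF Q a]
    by (simp add: red_poly[OF Q a, symmetric] red_eq_0_iff)
  show "nabs (poly (wronskian P Q) a) < 1"
    using reduced(2) nabs_poly_le_1[OF integral_poly_wronskian[OF P Q] a]
    by (simp add: red_poly_wronskian[OF P Q a, symmetric] red_eq_0_iff)
qed

lemma reduction_degree_gap_coeffs:
  fixes P Q :: "'a::nonarch_field poly"
  assumes P: "integral_poly P" and Q: "integral_poly Q"
    and good: "rat_deg (map_poly red P) (map_poly red Q) = rat_deg P Q"
    and red_deg: "degree (map_poly red Q) + 2 \<le> degree (map_poly red P)"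
  defines "D \<equiv> degree P"
  shows "degree Q \<le> D" "1 \<le> D" "nabs (coeff P D) = 1"
    "nabs (coeff P D * coeff Q (D - 1) - coeff Q D * coeff P (D - 1)) < 1"
proof -
  have deg: "degree (map_poly red P) = D"
    using good red_deg map_poly_degree_leq[of red P] map_poly_degree_leq[of red Q]
    by (auto simp: rat_deg_def D_def)
  then show "degree Q \<le> D" "1 \<le> D"
    using good red_deg map_poly_degree_leq[of red Q] by (auto simp: rat_deg_def D_def)
  have coeff_le_1: "nabs (coeff R i) \<le> 1" if "integral_poly R" for R i
    using that by (simp add: integral_poly_def)
  have "map_poly red P \<noteq> 0" using deg red_deg by auto
  then have "coeff (map_poly red P) D \<noteq> 0" using deg leading_coeff_0_iff by metis
  then show PD: "nabs (coeff P D) = 1"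
    using coeff_le_1[OF P] by (simp add: coeff_map_poly red_eq_0_iff order_less_le)
  have "coeff (map_poly red Q) D = 0" "coeff (map_poly red Q) (D - 1) = 0"
    using red_deg deg by (auto intro!: coeff_eq_0)
  then have QD: "nabs (coeff Q D) < 1" "nabs (coeff Q (D - 1)) < 1"
    using coeff_le_1[OF Q] by (simp_all add: coeff_map_poly red_eq_0_iff)
  have "nabs (coeff Q D * coeff P (D - 1)) < 1"
    using QD(1) coeff_le_1[OF P, of "D - 1"] nabs_nonneg[of "coeff Q D"]
    by (simp add: nabs_mult) (meson le_less_trans mult_left_le)
  then show "nabs (coeff P D * coeff Q (D - 1) - coeff Q D * coeff P (D - 1)) < 1"
    using nabs_diff[of "coeff P D * coeff Q (D - 1)" "coeff Q D * coeff P (D - 1)"] PD QD(2)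
    by (simp add: nabs_mult)
qed

lemma fixed_seminorm_outside_closed_disk_not_norm:
  fixes z :: "'a::nonarch_field poly \<Rightarrow> real"
  assumes z: "mult_seminorm z" and complete: "nabs_complete TYPE('a)"
    and P: "integral_poly P" and Q: "integral_poly Q" and zX: "1 < z [:0,1:]"
    and good: "rat_deg (map_poly red P) (map_poly red Q) = rat_deg P Q"
    and fixed_dir: "rat_eval (map_poly red P) (map_poly red Q) None = None"
    and critical: "2 \<le> rat_mult (map_poly red P) (map_poly red Q) None"
    and fixed: "\<And>c. z [:-c,1:] * z Q = z (P - smult c Q)"
  shows "\<exists>f. f \<noteq> 0 \<and> z f = 0"
proof -
  define D where "D = degree P"
  note coeffs = reduction_degree_gap_coeffs[OF P Q good
      fixed_critical_point_infinity[OF fixed_dir critical], folded D_def]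
  have dP: "degree P \<le> D" by (simp add: D_def)
  have W0: "nabs (poly (wronskian (reflect_deg D Q) (reflect_deg D P)) 0) < 1"
    using coeffs(4) by (simp add: poly_wronskian_reflect_deg_0[OF coeffs(2) dP coeffs(1)])
  have Q0: "nabs (poly (reflect_deg D P) 0) = 1"
    using coeffs(3) by (simp add: poly_0_coeff_0 coeff_reflect_deg[OF dP])
  have zX0: "0 < z [:0,1:]" using zX by simp
  have zi_X: "inversion_seminorm z [:-0,1:] < 1"
    using zX by (simp add: inversion_seminorm_X[OF z zX0])
  obtain f where "f \<noteq> 0" "inversion_seminorm z f = 0"
    using fixed_seminorm_not_norm[OF mult_seminorm_inversion[OF z zX0] complete
        integral_poly_reflect_deg[OF Q coeffs(1)] integral_poly_reflect_deg[OF P dP] _ zi_X Q0 W0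
        inversion_seminorm_fixed[OF z zX0 dP coeffs(1) fixed]]
    by auto
  then show ?thesis using zX0
    by (intro exI[of _ "reflect_poly f"]) (simp add: inversion_seminorm_def)
qed

theorem lemma3p8:
  fixes P Q :: "'a::nonarch_field poly" and v :: "'a res option" and \<xi> :: "'a berk"
  assumes nontriv: "nabs_nontrivial TYPE('a)"
    and complete: "nabs_complete TYPE('a)"
    and closed: "alg_closed TYPE('a)"
    and phi: "coprime P Q" "rat_deg P Q \<ge> 2"
    and good: "good_reduction P Q"
    and fixed_dir: "rat_eval (red_num P Q) (red_den P Q) v = v"
    and crit_dir: "rat_mult (red_num P Q) (red_den P Q) v \<ge> 2"
    and xi: "\<xi> \<in> berk_P1" "\<xi> \<in> berk_dir_disk v"
    and fixed: "berk_map P Q \<xi> = \<xi>"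
  shows "is_type1 \<xi>"
proof -
  obtain s where s: "s \<noteq> 0" "integral_poly (smult s P)" "integral_poly (smult s Q)"
    "red_num P Q = map_poly red (smult s P)" "red_den P Q = map_poly red (smult s Q)"
    using good_reduction_normal_form[OF good] phi(2) by auto
  have good_s: "rat_deg (red_num P Q) (red_den P Q) = rat_deg (smult s P) (smult s Q)"
    using good s(1) by (simp add: good_reduction_def rat_deg_def)
  have fixed_linear: "z [:-c,1:] * z (smult s Q) = z (smult s P - smult c (smult s Q))"
    if "mult_seminorm z" "\<xi> = Some z" for z c
    using berk_map_fixed_linear[OF that(1)] fixed that(2) by simp
  show ?thesis
  proof (cases v)
    case None
    from xi(2) None consider "\<xi> = None" | z where "\<xi> = Some z" "mult_seminorm z" "1 < z [:0,1:]"
      unfolding berk_dir_disk_def by auto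
    then show ?thesis
    proof cases
      case 2
      then obtain f where "f \<noteq> 0" "z f = 0"
        using fixed_seminorm_outside_closed_disk_not_norm[OF 2(2) complete s(2,3) 2(3) _ _ _
            fixed_linear[OF 2(2,1)]] good_s fixed_dir crit_dir None s(4,5)
        by auto
      then show ?thesis using is_type1_if_kernel[OF 2(2) closed] 2(1) by simp
    qed (simp add: is_type1_def)
  next
    case (Some t)
    with xi(2) obtain z a where
      z: "\<xi> = Some z" "mult_seminorm z" "nabs a \<le> 1" "red a = t" "z [:-a,1:] < 1"
      unfolding berk_dir_disk_def by auto
    then obtain f where "f \<noteq> 0" "z f = 0"
      using fixed_seminorm_in_residue_disk_not_norm[OF z(2) complete s(2,3) z(3,5) _ _
          fixed_linear[OF z(2,1)]] fixed_dir crit_dir Some s(4,5)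
      by auto
    then show ?thesis using is_type1_if_kernel[OF z(2) closed] z(1) by simp
  qed
qed

end
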